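(* Let $H$ be either the English board $H_E$ or the French board $H_F$ (defined in the context). Let $b\subseteq H$ be a board position which is solvable and which is invariant under the $180^\circ$ rotation $(x,y)\mapsto(-x,-y)$. Equivalently, $b$ has one of the symmetry types 1–5: square symmetry, $90^\circ$ rotational symmetry, symmetry under both diagonal reflections, symmetry under both orthogonal reflections, or $180^\circ$ rotational symmetry. Then $b$ lies in position class A. Moreover, $b$ is solvable to the centre: there is a sequence of jumps from $b$ ending at the position consisting of the single peg at $(0,0)$.
   Context: Holes are points of $\mathbb{Z}^2$. - The English (33-hole) board is $H_E=\{(x,y)\in\mathbb{Z}^2: |x|\le 3,\ |y|\le 3,\ \min(|x|,|y|)\le 1\}$. - The French (37-hole) board is $H_F=H_E\cup\{(\pm2,\pm2)\}$. - A board position is a subset $b\subseteq H$, namely the set of holes occupied by pegs. - A jump: given $d\in\{(\pm1,0),(0,\pm1)\}$ and $p$ with $p,p+d,p+2d\in H$, $p,p+d\in b$ and $p+2d\notin b$, the jump replaces $b$ by $(b\setminus\{p,p+d\})\cup\{p+2d\}$. - A position is solvable if some finite sequence of jumps leads from it to a position with exactly one peg. Symmetry types. The symmetries of the board are the elements of the dihedral group of the square acting on $\mathbb{Z}^2$ about $(0,0)$. "Orthogonal reflections" are $(x,y)\mapsto(-x,y)$ and $(x,y)\mapsto(x,-y)$. "Diagonal reflections" are $(x,y)\mapsto(y,x)$ and $(x,y)\mapsto(-y,-x)$. Position class A. For a position $b$ and $i\in\{0,1,2\}$, let $N_i=|\{(x,y)\in b: x+y\equiv i \pmod 3\}|$ and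 $M_i=|\{(x,y)\in b: x-y\equiv i\pmod 3\}|$. The position $b$ lies in position class A if all of the following hold: - $N_1+N_2$ is even and $N_0+N_2$ and $N_0+N_1$ are odd; - $M_1+M_2$ is even and $M_0+M_2$ and $M_0+M_1$ are odd. This is the position class of the single peg at $(0,0)$. *)

theory Defs
  imports Main
begin

type_synonym hole = "int \<times> int"

definition english_board :: "hole set" where
  "english_board = {(x,y). \<bar>x\<bar> \<le> 3 \<and> \<bar>y\<bar> \<le> 3 \<and> min \<bar>x\<bar> \<bar>y\<bar> \<le> 1}"

definition french_board :: "hole set" where
  "french_board = english_board \<union> {(2,2), (2,-2), (-2,2), (-2,-2)}"

definition directions :: "hole set" where
  "directions = {(1,0), (-1,0), (0,1), (0,-1)}"

definition padd :: "hole \<Rightarrow> hole \<Rightarrow> hole" where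
  "padd p q = (fst p + fst q, snd p + snd q)"

definition jump :: "hole set \<Rightarrow> hole set \<Rightarrow> hole set \<Rightarrow> bool" where
  "jump H b b' \<longleftrightarrow> (\<exists>d p. d \<in> directions \<and>
      p \<in> H \<and> padd p d \<in> H \<and> padd p (padd d d) \<in> H \<and>
      p \<in> b \<and> padd p d \<in> b \<and> padd p (padd d d) \<notin> b \<and>
      b' = (b - {p, padd p d}) \<union> {padd p (padd d d)})"

definition solvable :: "hole set \<Rightarrow> hole set \<Rightarrow> bool" where
  "solvable H b \<longleftrightarrow> (\<exists>b'. (jump H)\<^sup>*\<^sup>* b b' \<and> card b' = 1)"

definition Ncount :: "hole set \<Rightarrow> int \<Rightarrow> nat" where
  "Ncount b i = card {(x,y) \<in> b. (x + y) mod 3 = i}"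

definition Mcount :: "hole set \<Rightarrow> int \<Rightarrow> nat" where
  "Mcount b i = card {(x,y) \<in> b. (x - y) mod 3 = i}"

definition classA :: "hole set \<Rightarrow> bool" where
  "classA b \<longleftrightarrow>
     even (Ncount b 1 + Ncount b 2) \<and> odd (Ncount b 0 + Ncount b 2) \<and> odd (Ncount b 0 + Ncount b 1) \<and>
     even (Mcount b 1 + Mcount b 2) \<and> odd (Mcount b 0 + Mcount b 2) \<and> odd (Mcount b 0 + Mcount b 1)"

end

theory Submission
  imports Defs
begin

text \<open>For a linear form f = a x + c y with a, c prime to 3, the three holes involved in a jump
have values f p, f p + e, f p + 2 e with e prime to 3, so every residue class mod 3 gains or loses
exactly one peg. Hence each count N_i flips parity, and the parities of N_i + N_j are invariant.
Point symmetry gives N_1 = N_2, so the final peg q has x + y and x - y divisible by 3: it is the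
centre or the midpoint of an edge of the board, and the position class of b is that of q, namely A.
A jump landing on an edge midpoint 3 d can only come from the pegs d and 2 d, which may jump to the
centre instead.\<close>

lemma one_of_three_in_residue_class:
  fixes a e i :: int
  assumes "\<not> 3 dvd e" "0 \<le> i" "i < 3"
  shows "(if a mod 3 = i then 1 else 0) + (if (a + e) mod 3 = i then 1 else 0)
         + (if (a + 2 * e) mod 3 = i then 1 else 0) = (1::int)"
proof -
  have res: "a mod 3 \<in> {0, 1, 2}" "e mod 3 \<in> {1, 2}" "i \<in> {0, 1, 2}"
    using assms by auto presburger+
  have "(a + e) mod 3 = (a mod 3 + e mod 3) mod 3"
    and "(a + 2 * e) mod 3 = (a mod 3 + 2 * (e mod 3)) mod 3"
    by (simp add: mod_simps) (metis mod_add_eq mod_add_right_eq mod_mult_right_eq)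
  then show ?thesis using res by (elim insertE emptyE) simp_all
qed

lemma card_filter_replace_two_by_one:
  assumes "finite b" "p \<in> b" "r \<in> b" "p \<noteq> r" "q \<notin> b"
  shows "int (card {z \<in> (b - {p, r}) \<union> {q}. P z}) + (if P p then 1 else 0) + (if P r then 1 else 0)
       = int (card {z \<in> b. P z}) + (if P q then 1 else 0)"
proof -
  define A where "A = {z \<in> b - {p, r}. P z}"
  have A: "finite A" "q \<notin> A" "p \<notin> A" "r \<notin> A" using assms unfolding A_def by auto
  have "{z \<in> (b - {p, r}) \<union> {q}. P z} = (if P q then insert q A else A)"
    and "{z \<in> b. P z} = (if P p then insert p else id) ((if P r then insert r else id) A)"
    unfolding A_def using assms by auto
  then show ?thesis using A assms(4) by (cases "P p"; cases "P r"; cases "P q") simp_all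
qed

definition residue_count :: "(hole \<Rightarrow> int) \<Rightarrow> hole set \<Rightarrow> int \<Rightarrow> nat" where
  "residue_count f b i = card {z \<in> b. f z mod 3 = i}"

lemma residue_count_singleton: "residue_count f {q} i = (if f q mod 3 = i then 1 else 0)"
proof -
  have "{z \<in> {q}. f z mod 3 = i} = (if f q mod 3 = i then {q} else {})" by auto
  then show ?thesis unfolding residue_count_def by simp
qed

lemma Ncount_eq: "Ncount b i = residue_count (\<lambda>(x, y). 1 * x + 1 * y) b i"
  unfolding Ncount_def residue_count_def by (rule arg_cong[where f = card]) auto

lemma Mcount_eq: "Mcount b i = residue_count (\<lambda>(x, y). 1 * x + (-1) * y) b i"
  unfolding Mcount_def residue_count_def by (rule arg_cong[where f = card]) auto

lemma residue_count_replace_odd: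
  assumes "finite b" "p \<in> b" "r \<in> b" "p \<noteq> r" "q \<notin> b"
    and "f r = f p + e" "f q = f p + 2 * e" "\<not> 3 dvd e" "0 \<le> i" "i < 3"
  shows "odd (residue_count f b i + residue_count f ((b - {p, r}) \<union> {q}) i)"
proof -
  have "int (residue_count f ((b - {p, r}) \<union> {q}) i)
          + (if f p mod 3 = i then 1 else 0) + (if f r mod 3 = i then 1 else 0)
        = int (residue_count f b i) + (if f q mod 3 = i then 1 else 0)"
    unfolding residue_count_def by (rule card_filter_replace_two_by_one[OF assms(1-5)])
  moreover have "(if f p mod 3 = i then 1 else 0) + (if f r mod 3 = i then 1 else 0)
                 + (if f q mod 3 = i then 1 else 0) = (1::int)"
    unfolding assms(6,7) using assms(8-10) by (rule one_of_three_in_residue_class)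
  ultimately have "odd (int (residue_count f b i + residue_count f ((b - {p, r}) \<union> {q}) i))"
    by presburger
  then show ?thesis by simp
qed

lemma residue_count_neg_symmetric:
  assumes sym: "\<forall>(x, y) \<in> b. (-x, -y) \<in> b"
  shows "residue_count (\<lambda>(x, y). a * x + c * y) b 1 = residue_count (\<lambda>(x, y). a * x + c * y) b 2"
proof -
  define f where "f = (\<lambda>(x, y). a * x + c * y)"
  define neg :: "hole \<Rightarrow> hole" where "neg = (\<lambda>(x, y). (- x, - y))"
  let ?A1 = "{z \<in> b. f z mod 3 = 1}" and ?A2 = "{z \<in> b. f z mod 3 = 2}"
  have neg_neg: "neg (neg z) = z" for z by (cases z) (simp add: neg_def)
  have "neg z \<in> b" if "z \<in> b" for z using sym that by (cases z) (auto simp: neg_def)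
  then have neg_in: "neg z \<in> b \<longleftrightarrow> z \<in> b" for z using neg_neg by metis
  have "(- t) mod 3 = 2 \<longleftrightarrow> t mod 3 = 1" for t :: int by presburger
  moreover have "f (neg z) = - f z" for z by (cases z) (simp add: f_def neg_def)
  ultimately have neg_class: "neg z \<in> ?A2 \<longleftrightarrow> z \<in> ?A1" for z
    using neg_in by simp
  have "neg ` ?A1 = ?A2"
  proof (intro equalityI subsetI)
    show "z \<in> ?A2" if "z \<in> neg ` ?A1" for z
      using that neg_class by blast
    show "z \<in> neg ` ?A1" if "z \<in> ?A2" for z
    proof (rule image_eqI)
      show "z = neg (neg z)" by (rule neg_neg[symmetric])
      show "neg z \<in> ?A1" using that neg_class[of "neg z"] by (simp only: neg_neg)
    qed
  qed
  moreover have "inj neg" by (rule injI) (metis neg_neg)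
  then have "card (neg ` ?A1) = card ?A1" by (rule card_image[OF inj_on_subset[OF _ subset_UNIV]])
  ultimately show ?thesis unfolding residue_count_def f_def[symmetric] by simp
qed

lemma directions_cases:
  "d \<in> directions \<Longrightarrow> d = (1, 0) \<or> d = (-1, 0) \<or> d = (0, 1) \<or> d = (0, -1)"
  unfolding directions_def by auto

lemma jump_finite: "jump H b b' \<Longrightarrow> finite b \<Longrightarrow> finite b'"
  unfolding jump_def by auto

lemma reachable_finite: "(jump H)\<^sup>*\<^sup>* b b' \<Longrightarrow> finite b \<Longrightarrow> finite b'"
  by (induction rule: rtranclp_induct) (auto intro: jump_finite)

lemma jump_residue_count_odd:
  fixes a c :: int
  assumes "jump H b b'" "finite b" "\<not> 3 dvd a" "\<not> 3 dvd c" "0 \<le> i" "i < 3"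
  shows "odd (residue_count (\<lambda>(x, y). a * x + c * y) b i + residue_count (\<lambda>(x, y). a * x + c * y) b' i)"
proof -
  let ?f = "\<lambda>(x, y). a * x + c * y"
  obtain d p where d: "d \<in> directions" and p: "p \<in> b" "padd p d \<in> b" "padd p (padd d d) \<notin> b"
      and b': "b' = (b - {p, padd p d}) \<union> {padd p (padd d d)}"
    using assms(1) unfolding jump_def by blast
  have "p \<noteq> padd p d" using directions_cases[OF d] by (cases p) (auto simp: padd_def)
  moreover have "?f (padd p d) = ?f p + ?f d" "?f (padd p (padd d d)) = ?f p + 2 * ?f d"
    by (auto simp: padd_def split: prod.splits; simp add: algebra_simps)+
  moreover have "\<not> 3 dvd ?f d" using directions_cases[OF d] assms(3,4) by auto
  ultimately show ?thesis unfolding b' using residue_count_replace_odd assms(2,5,6) p by blast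
qed

lemma jump_residue_pair_parity:
  fixes a c :: int
  assumes "jump H b b'" "finite b" "\<not> 3 dvd a" "\<not> 3 dvd c"
    and "i \<in> {0, 1, 2}" "j \<in> {0, 1, 2}"
  defines "f \<equiv> \<lambda>(x, y). a * x + c * y"
  shows "even (residue_count f b' i + residue_count f b' j) \<longleftrightarrow>
         even (residue_count f b i + residue_count f b j)"
  using jump_residue_count_odd[OF assms(1-4), of i] jump_residue_count_odd[OF assms(1-4), of j] assms(5,6)
  unfolding f_def by auto

lemma reachable_residue_pair_parity:
  fixes a c :: int
  assumes "(jump H)\<^sup>*\<^sup>* b b'" "finite b" "\<not> 3 dvd a" "\<not> 3 dvd c"
    and "i \<in> {0, 1, 2}" "j \<in> {0, 1, 2}"
  defines "f \<equiv> \<lambda>(x, y). a * x + c * y"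
  shows "even (residue_count f b' i + residue_count f b' j) \<longleftrightarrow>
         even (residue_count f b i + residue_count f b j)"
  using assms(1,2)
proof (induction rule: rtranclp_induct)
  case (step b'' b')
  with reachable_finite have "finite b''" by blast
  with step show ?case using jump_residue_pair_parity[OF step.hyps(2) _ assms(3-6)] unfolding f_def by blast
qed simp

lemma reachable_classA_iff:
  assumes "(jump H)\<^sup>*\<^sup>* b b'" "finite b"
  shows "classA b' \<longleftrightarrow> classA b"
  using reachable_residue_pair_parity[OF assms, of 1 1] reachable_residue_pair_parity[OF assms, of 1 "-1"]
  unfolding classA_def Ncount_eq Mcount_eq by simp

lemma classA_singleton:
  "(fst q + snd q) mod 3 = 0 \<Longrightarrow> (fst q - snd q) mod 3 = 0 \<Longrightarrow> classA {q}"
  unfolding classA_def Ncount_eq Mcount_eq residue_count_singleton by (auto split: prod.splits)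

lemma reachable_singleton_residue_zero:
  fixes a c :: int
  assumes "(jump H)\<^sup>*\<^sup>* b {q}" "finite b" "\<forall>(x, y) \<in> b. (-x, -y) \<in> b"
    and "\<not> 3 dvd a" "\<not> 3 dvd c"
  shows "(a * fst q + c * snd q) mod 3 = 0"
proof -
  have "even (residue_count (\<lambda>(x, y). a * x + c * y) {q} 1 + residue_count (\<lambda>(x, y). a * x + c * y) {q} 2)"
    using reachable_residue_pair_parity[OF assms(1,2,4,5), of 1 2] residue_count_neg_symmetric[OF assms(3)] by simp
  moreover have "(a * fst q + c * snd q) mod 3 \<in> {0, 1, 2}" by auto
  ultimately show ?thesis unfolding residue_count_singleton by (auto split: prod.splits)
qed

lemma board_finite:
  assumes "H = english_board \<or> H = french_board"
  shows "finite H"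
proof -
  have "H \<subseteq> {-3..3} \<times> {-3..3}"
    using assms unfolding french_board_def english_board_def by auto
  then show ?thesis by (rule finite_subset) simp
qed

lemma board_hole_bounds:
  assumes "H = english_board \<or> H = french_board" "(x, y) \<in> H"
  shows "\<bar>x\<bar> \<le> 3 \<and> \<bar>y\<bar> \<le> 3 \<and>
         (\<bar>x\<bar> \<le> 1 \<or> \<bar>y\<bar> \<le> 1 \<or> \<bar>x\<bar> = 2 \<and> \<bar>y\<bar> = 2)"
  using assms unfolding french_board_def english_board_def by (auto simp: min_def split: if_splits)

lemma board_residue_zero_holes:
  assumes "H = english_board \<or> H = french_board" "(x, y) \<in> H" "(x + y) mod 3 = 0" "(x - y) mod 3 = 0"
  shows "(x, y) \<in> {(0, 0), (3, 0), (-3, 0), (0, 3), (0, -3)}"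
  using board_hole_bounds[OF assms(1,2)] assms(3,4) by simp presburger

lemma jump_onto_board_edge_from_unit:
  assumes "H = english_board \<or> H = french_board" "p \<in> H" "d \<in> directions"
    "padd p (padd d d) \<in> {(3, 0), (-3, 0), (0, 3), (0, -3)}"
  shows "p = d"
proof -
  obtain x y where p: "p = (x, y)" by (cases p)
  from board_hole_bounds[OF assms(1) assms(2)[unfolded p]] directions_cases[OF assms(3)] assms(4)
  show ?thesis unfolding p by (auto simp: padd_def)
qed

lemma jump_to_singleton:
  assumes "jump H c {q}"
  obtains p d where "d \<in> directions" "p \<in> H" "q \<in> H" "c = {p, padd p d}" "q = padd p (padd d d)"
proof -
  obtain p d where "d \<in> directions" "p \<in> H" "padd p (padd d d) \<in> H"
      "p \<in> c" "padd p d \<in> c" "padd p (padd d d) \<notin> c"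
      "{q} = (c - {p, padd p d}) \<union> {padd p (padd d d)}"
    using assms unfolding jump_def by blast
  then have "d \<in> directions" "p \<in> H" "q \<in> H" "c = {p, padd p d}" "q = padd p (padd d d)" by auto
  then show ?thesis using that by blast
qed

lemma english_board_subset_board:
  "H = english_board \<or> H = french_board \<Longrightarrow> english_board \<subseteq> H"
  unfolding french_board_def by auto

lemma jump_unit_pair_to_centre:
  assumes "H = english_board \<or> H = french_board" "d \<in> directions"
  shows "jump H {d, padd d d} {(0, 0)}"
proof -
  let ?e = "(- fst d, - snd d)"
  from directions_cases[OF assms(2)]
  have "padd d d \<in> english_board" "d \<in> english_board" "(0, 0) \<in> english_board"
    "?e \<in> directions" "d \<noteq> (0, 0)" "padd d d \<noteq> (0, 0)"
    unfolding english_board_def directions_def padd_def by (elim disjE; simp)+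
  moreover have "padd (padd d d) ?e = d" "padd (padd d d) (padd ?e ?e) = (0, 0)"
    by (simp_all add: padd_def)
  ultimately show ?thesis
    using english_board_subset_board[OF assms(1)] unfolding jump_def
    by (intro exI[of _ ?e] exI[of _ "padd d d"]) auto
qed

lemma reachable_centre_from_residue_zero_singleton:
  assumes "H = english_board \<or> H = french_board" "(jump H)\<^sup>*\<^sup>* b {q}" "b \<noteq> {q}"
    "(fst q + snd q) mod 3 = 0" "(fst q - snd q) mod 3 = 0"
  shows "(jump H)\<^sup>*\<^sup>* b {(0, 0)}"
proof (cases "q = (0, 0)")
  case False
  obtain c where "(jump H)\<^sup>*\<^sup>* b c" "jump H c {q}"
    using assms(2,3) by (metis rtranclp.cases)
  moreover obtain p d where "d \<in> directions" "p \<in> H" "q \<in> H" "c = {p, padd p d}" "q = padd p (padd d d)"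
    using jump_to_singleton[OF \<open>jump H c {q}\<close>] .
  moreover have "q \<in> {(3, 0), (-3, 0), (0, 3), (0, -3)}"
    using board_residue_zero_holes[OF assms(1), of "fst q" "snd q"] \<open>q \<in> H\<close> assms(4,5) False by auto
  ultimately show ?thesis
    using jump_onto_board_edge_from_unit[OF assms(1)] jump_unit_pair_to_centre[OF assms(1)]
    by (metis rtranclp.rtrancl_into_rtrancl)
qed (use assms(2) in simp)

theorem theorem1:
  fixes H b :: "hole set"
  assumes "H = english_board \<or> H = french_board"
    and "b \<subseteq> H"
    and "solvable H b"
    and "\<forall>(x,y) \<in> b. (-x, -y) \<in> b"
  shows "classA b \<and> (jump H)\<^sup>*\<^sup>* b {(0,0)}"
proof -
  have fin: "finite b" using board_finite[OF assms(1)] assms(2) by (rule finite_subset[rotated])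
  obtain q where reach: "(jump H)\<^sup>*\<^sup>* b {q}"
    using assms(3) unfolding solvable_def by (metis card_1_singletonE)
  have "(1 * fst q + 1 * snd q) mod 3 = 0" "(1 * fst q + (-1) * snd q) mod 3 = 0"
    by (rule reachable_singleton_residue_zero[OF reach fin assms(4)]; simp)+
  then have residues: "(fst q + snd q) mod 3 = 0" "(fst q - snd q) mod 3 = 0" by simp_all
  have "classA b"
    using classA_singleton[OF residues] reachable_classA_iff[OF reach fin] by simp
  moreover have "(jump H)\<^sup>*\<^sup>* b {(0, 0)}"
  proof (cases "b = {q}")
    case True
    then have "q = (0, 0)" using assms(4) by (cases q) auto
    with reach show ?thesis by simp
  qed (use reachable_centre_from_residue_zero_singleton[OF assms(1) reach _ residues] in simp)
  ultimately show ?thesis ..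
qed

end
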